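(* Let $\pi$ be uniform on $\mathrm{PF}_n$ and $Z(\pi)=\#\{i:\pi_i=1\}$. Then for each fixed integer $j\ge0$, $P(Z(\pi)=1+j)\to\frac{1}{e\,j!}$ as $n\to\infty$.
   Context: A parking function of length $n$ is a sequence $(\pi_1,\dots,\pi_n)$ with $1\le\pi_i\le n$ such that $\#\{t:\pi_t\le i\}\ge i$ for all $1\le i\le n$; $\mathrm{PF}_n$ denotes the set of these. *)

theory Defs
  imports "HOL-Analysis.Analysis" "HOL-Library.FuncSet"
begin

definition parking_functions :: "nat \<Rightarrow> (nat \<Rightarrow> nat) set" where
  "parking_functions n =
     {p \<in> {1..n} \<rightarrow>\<^sub>E {1..n}. \<forall>i\<in>{1..n}. card {t \<in> {1..n}. p t \<le> i} \<ge> i}"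

definition num_ones :: "nat \<Rightarrow> (nat \<Rightarrow> nat) \<Rightarrow> nat" where
  "num_ones n p = card {i \<in> {1..n}. p i = 1}"

definition prob_ones :: "nat \<Rightarrow> nat \<Rightarrow> real" where
  "prob_ones n k = real (card {p \<in> parking_functions n. num_ones n p = k})
                   / real (card (parking_functions n))"

end

theory Submission
  imports Defs "HOL-Real_Asymp.Real_Asymp"
begin

text \<open>Generalise parking functions to maps \<open>q : D \<rightarrow> {1..|D| + a}\<close> with \<open>a\<close> surplus spots,
  i.e. \<open>#{t. q t \<le> i} \<ge> i - a\<close> for every spot \<open>i\<close> (\<open>surplus_pf D a\<close>). Deleting the \<open>s\<close> cars that prefer spot 1
  and moving every other car one spot down leaves such a map with surplus \<open>a + s - 1\<close>, and this is
  a bijection onto the maps with the prescribed set of ones. The resulting recursion is solved by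
  \<open>(a + 1) (m + a + 1)^(m - 1)\<close> for \<open>m = |D| \<ge> 1\<close> (Abel-type binomial identity). Hence
  \<open>P(Z = k) = C(n,k) k n^(n-k-1) / (n+1)^(n-1)\<close>, and \<open>C(n,k)/n^k \<rightarrow> 1/k!\<close>,
  \<open>(n/(n+1))^(n-1) \<rightarrow> 1/e\<close> give the limit.\<close>

definition surplus_pf :: "'a set \<Rightarrow> nat \<Rightarrow> ('a \<Rightarrow> nat) set" where
  "surplus_pf D a =
     {q \<in> D \<rightarrow>\<^sub>E {1..card D + a}. \<forall>i\<in>{1..card D + a}. i \<le> card {t\<in>D. q t \<le> i} + a}"

definition surplus_pf_count :: "nat \<Rightarrow> nat \<Rightarrow> nat" where
  "surplus_pf_count m a = (if m = 0 then 1 else (a + 1) * (m + a + 1) ^ (m - 1))"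

lemma parking_functions_eq_surplus_pf: "parking_functions n = surplus_pf {1..n} 0"
  by (simp add: parking_functions_def surplus_pf_def)

lemma finite_surplus_pf: "finite D \<Longrightarrow> finite (surplus_pf D a)"
  unfolding surplus_pf_def
  by (rule finite_subset[of _ "D \<rightarrow>\<^sub>E {1..card D + a}"]) (auto intro: finite_PiE)

lemma surplus_pf_zero_has_one:
  assumes "finite D" "D \<noteq> {}" "q \<in> surplus_pf D 0"
  shows "{t\<in>D. q t = 1} \<noteq> {}"
proof
  assume no_one: "{t\<in>D. q t = 1} = {}"
  have "q \<in> D \<rightarrow>\<^sub>E {1..card D}" and count: "\<forall>i\<in>{1..card D}. i \<le> card {t\<in>D. q t \<le> i}"
    using assms(3) unfolding surplus_pf_def by auto
  then have "{t\<in>D. q t \<le> 1} = {}"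
    using no_one by (force dest: PiE_mem)
  moreover have "1 \<le> card D"
    using assms(1,2) by (simp add: Suc_le_eq card_gt_0_iff)
  ultimately have "1 \<le> card {t\<in>D. q t \<le> 1}"
    using count by auto
  with \<open>{t\<in>D. q t \<le> 1} = {}\<close> show False
    by (metis card.empty not_one_le_zero)
qed

lemma card_le_Suc_split:
  fixes q :: "'a \<Rightarrow> nat"
  assumes "finite D" "S \<subseteq> D" "\<forall>t\<in>S. q t = 1" "\<forall>t\<in>D - S. 1 < q t"
  shows "card {t\<in>D. q t \<le> Suc i} = card S + card {t\<in>D - S. q t - 1 \<le> i}"
proof -
  have split: "{t\<in>D. q t \<le> Suc i} = S \<union> {t\<in>D - S. q t - 1 \<le> i}"
    using assms(2-4) by force
  show ?thesis
    unfolding split by (rule card_Un_disjoint) (use assms(1,2) finite_subset in auto)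
qed

definition lift_ones :: "'a set \<Rightarrow> 'a set \<Rightarrow> ('a \<Rightarrow> nat) \<Rightarrow> 'a \<Rightarrow> nat" where
  "lift_ones D S r = (\<lambda>t. if t \<in> S then 1 else if t \<in> D then Suc (r t) else undefined)"

lemma card_le_Suc_lift_ones:
  assumes "finite D" "S \<subseteq> D" "\<forall>t\<in>D - S. 0 < r t"
  shows "card {t\<in>D. lift_ones D S r t \<le> Suc i} = card S + card {t\<in>D - S. r t \<le> i}"
proof -
  have "card {t\<in>D. lift_ones D S r t \<le> Suc i}
      = card S + card {t\<in>D - S. lift_ones D S r t - 1 \<le> i}"
    by (rule card_le_Suc_split[OF assms(1,2)]) (use assms(3) in \<open>auto simp: lift_ones_def\<close>)
  also have "{t\<in>D - S. lift_ones D S r t - 1 \<le> i} = {t\<in>D - S. r t \<le> i}"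
    by (auto simp: lift_ones_def)
  finally show ?thesis .
qed

lemma lift_ones_mem_surplus_pf:
  assumes fin: "finite D" and SD: "S \<subseteq> D" and pos: "1 \<le> a + card S"
    and r: "r \<in> surplus_pf (D - S) (a + card S - 1)"
  shows "lift_ones D S r \<in> surplus_pf D a" and "{t\<in>D. lift_ones D S r t = 1} = S"
proof -
  have cDS: "card (D - S) + (a + card S - 1) = card D + a - 1"
    using card_Diff_subset[OF finite_subset[OF SD fin] SD] card_mono[OF fin SD] pos by simp
  have r_range: "r \<in> (D - S) \<rightarrow>\<^sub>E {1..card D + a - 1}"
    and r_count: "\<forall>i\<in>{1..card D + a - 1}. i \<le> card {t\<in>D - S. r t \<le> i} + (a + card S - 1)"
    using r unfolding surplus_pf_def cDS by auto
  have r_pos: "0 < r t" if "t \<in> D - S" for t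
    using PiE_mem[OF r_range that] by simp
  show ones: "{t\<in>D. lift_ones D S r t = 1} = S"
    using SD r_pos by (force simp: lift_ones_def)
  have range: "lift_ones D S r \<in> D \<rightarrow>\<^sub>E {1..card D + a}"
  proof (rule PiE_I)
    fix t assume t: "t \<in> D"
    show "lift_ones D S r t \<in> {1..card D + a}"
    proof (cases "t \<in> S")
      case True
      then have "0 < card D"
        using t fin by (auto simp: card_gt_0_iff)
      then show ?thesis
        using True by (simp add: lift_ones_def)
    next
      case False
      then show ?thesis
        using t PiE_mem[OF r_range, of t] by (auto simp: lift_ones_def)
    qed
  qed (use SD in \<open>auto simp: lift_ones_def\<close>)
  have "i \<le> card {t\<in>D. lift_ones D S r t \<le> i} + a" if i: "i \<in> {1..card D + a}" for i
  proof -
    obtain i' where i': "i = Suc i'"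
      using i by (cases i) auto
    have split: "card {t\<in>D. lift_ones D S r t \<le> Suc i'} = card S + card {t\<in>D - S. r t \<le> i'}"
      by (rule card_le_Suc_lift_ones[OF fin SD]) (use r_pos in auto)
    show ?thesis
    proof (cases "i' = 0")
      case True
      then show ?thesis using i' split pos by simp
    next
      case False
      then have "i' \<le> card {t\<in>D - S. r t \<le> i'} + (a + card S - 1)"
        using r_count i i' by auto
      then show ?thesis using i' split pos by simp
    qed
  qed
  then show "lift_ones D S r \<in> surplus_pf D a"
    unfolding surplus_pf_def using range by blast
qed

lemma lower_mem_surplus_pf:
  assumes fin: "finite D" and pos: "1 \<le> a + card S"
    and q: "q \<in> surplus_pf D a" and ones: "{t\<in>D. q t = 1} = S"
  shows "restrict (\<lambda>t. q t - 1) (D - S) \<in> surplus_pf (D - S) (a + card S - 1)"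
proof -
  let ?r = "restrict (\<lambda>t. q t - 1) (D - S)"
  have SD: "S \<subseteq> D" using ones by auto
  have q_range: "q \<in> D \<rightarrow>\<^sub>E {1..card D + a}"
    and q_count: "\<forall>i\<in>{1..card D + a}. i \<le> card {t\<in>D. q t \<le> i} + a"
    using q unfolding surplus_pf_def by auto
  have q_gt: "\<forall>t\<in>D - S. 1 < q t"
    using ones PiE_mem[OF q_range] by fastforce
  have cDS: "card (D - S) + (a + card S - 1) = card D + a - 1"
    using card_Diff_subset[OF finite_subset[OF SD fin] SD] card_mono[OF fin SD] pos by simp
  have range: "?r \<in> (D - S) \<rightarrow>\<^sub>E {1..card D + a - 1}"
    unfolding restrict_PiE_iff
  proof
    fix t assume t: "t \<in> D - S"
    then have "1 < q t"
      using q_gt by blast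
    then show "q t - 1 \<in> {1..card D + a - 1}"
      using t PiE_mem[OF q_range, of t] by auto
  qed
  have "i \<le> card {t\<in>D - S. ?r t \<le> i} + (a + card S - 1)" if i: "i \<in> {1..card D + a - 1}" for i
  proof -
    have "card {t\<in>D. q t \<le> Suc i} = card S + card {t\<in>D - S. q t - 1 \<le> i}"
      by (rule card_le_Suc_split[OF fin SD]) (use ones q_gt in auto)
    moreover have "{t\<in>D - S. q t - 1 \<le> i} = {t\<in>D - S. ?r t \<le> i}"
      by auto
    moreover have "Suc i \<le> card {t\<in>D. q t \<le> Suc i} + a"
      using q_count i by auto
    ultimately show ?thesis using pos by simp
  qed
  then show ?thesis
    unfolding surplus_pf_def cDS using range by blast
qed

lemma card_surplus_pf_ones_fiber:
  assumes fin: "finite D" and SD: "S \<subseteq> D" and pos: "1 \<le> a + card S"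
  shows "card {q \<in> surplus_pf D a. {t\<in>D. q t = 1} = S} = card (surplus_pf (D - S) (a + card S - 1))"
proof -
  have "bij_betw (lift_ones D S) (surplus_pf (D - S) (a + card S - 1))
          {q \<in> surplus_pf D a. {t\<in>D. q t = 1} = S}"
  proof (rule bij_betwI[where g = "\<lambda>q. restrict (\<lambda>t. q t - 1) (D - S)"])
    show "lift_ones D S \<in> surplus_pf (D - S) (a + card S - 1) \<rightarrow> {q \<in> surplus_pf D a. {t\<in>D. q t = 1} = S}"
      using lift_ones_mem_surplus_pf[OF fin SD pos] by blast
    show "(\<lambda>q. restrict (\<lambda>t. q t - 1) (D - S))
            \<in> {q \<in> surplus_pf D a. {t\<in>D. q t = 1} = S} \<rightarrow> surplus_pf (D - S) (a + card S - 1)"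
      using lower_mem_surplus_pf[OF fin pos] by blast
    show "restrict (\<lambda>t. lift_ones D S r t - 1) (D - S) = r"
      if "r \<in> surplus_pf (D - S) (a + card S - 1)" for r
      using that by (auto simp: surplus_pf_def lift_ones_def PiE_def extensional_def)
    show "lift_ones D S (restrict (\<lambda>t. q t - 1) (D - S)) = q"
      if "q \<in> {q \<in> surplus_pf D a. {t\<in>D. q t = 1} = S}" for q
      using that by (force simp: surplus_pf_def lift_ones_def PiE_def extensional_def)
  qed
  then show ?thesis
    by (simp add: bij_betw_same_card)
qed

lemma card_surplus_pf_sum_fibers:
  assumes fin: "finite D" and ne: "D \<noteq> {}"
  shows "card (surplus_pf D a) =
    (\<Sum>S\<in>Pow D. if 1 \<le> a + card S then card (surplus_pf (D - S) (a + card S - 1)) else 0)"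
proof -
  have "(\<lambda>q. {t\<in>D. q t = 1}) ` surplus_pf D a \<subseteq> Pow D"
    by auto
  then have "card (surplus_pf D a) = (\<Sum>S\<in>Pow D. card {q \<in> surplus_pf D a. {t\<in>D. q t = 1} = S})"
    using sum.group[of "surplus_pf D a" "Pow D" "\<lambda>q. {t\<in>D. q t = 1}" "\<lambda>_. 1 :: nat"]
    by (simp add: fin finite_surplus_pf)
  also have "\<dots> = (\<Sum>S\<in>Pow D. if 1 \<le> a + card S then card (surplus_pf (D - S) (a + card S - 1)) else 0)"
  proof (rule sum.cong[OF refl])
    fix S assume "S \<in> Pow D"
    then have SD: "S \<subseteq> D" by simp
    show "card {q \<in> surplus_pf D a. {t\<in>D. q t = 1} = S}
        = (if 1 \<le> a + card S then card (surplus_pf (D - S) (a + card S - 1)) else 0)"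
    proof (cases "1 \<le> a + card S")
      case True
      then show ?thesis
        using card_surplus_pf_ones_fiber[OF fin SD] by simp
    next
      case False
      then have "a = 0" and "card S = 0"
        by auto
      then have "a = 0" and "S = {}"
        using finite_subset[OF SD fin] by auto
      moreover have "{q \<in> surplus_pf D 0. {t\<in>D. q t = 1} = {}} = {}"
        using surplus_pf_zero_has_one[OF fin ne] by blast
      ultimately show ?thesis
        by (simp only:) simp
    qed
  qed
  finally show ?thesis .
qed

lemma sum_Pow_card:
  assumes "finite D"
  shows "(\<Sum>S\<in>Pow D. h (card S)) = (\<Sum>c\<le>card D. of_nat (card D choose c) * h c)"
proof -
  have "(\<Sum>S\<in>Pow D. h (card S)) = (\<Sum>c\<le>card D. \<Sum>S\<in>{S \<in> Pow D. card S = c}. h (card S))"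
    by (rule sum.group[symmetric]) (use assms card_mono in auto)
  also have "\<dots> = (\<Sum>c\<le>card D. of_nat (card D choose c) * h c)"
  proof (rule sum.cong[OF refl])
    fix c
    have "(\<Sum>S\<in>{S \<in> Pow D. card S = c}. h (card S)) = (\<Sum>S\<in>{S. S \<subseteq> D \<and> card S = c}. h c)"
      by (rule sum.cong) auto
    then show "(\<Sum>S\<in>{S \<in> Pow D. card S = c}. h (card S)) = of_nat (card D choose c) * h c"
      using n_subsets[OF assms] by simp
  qed
  finally show ?thesis .
qed

lemma sum_binomial_power:
  "(\<Sum>k\<le>m. of_nat (m choose k) * x ^ (m - k)) = (x + 1 :: 'a :: comm_semiring_1) ^ m"
  using binomial_ring[of 1 x m] by (simp add: add.commute)

lemma sum_binomial_times_index_power: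
  "(\<Sum>k\<le>Suc p. of_nat (Suc p choose k) * of_nat k * x ^ (Suc p - k))
     = of_nat (Suc p) * (x + 1 :: 'a :: comm_semiring_1) ^ p"
proof -
  have "(\<Sum>k\<le>Suc p. of_nat (Suc p choose k) * of_nat k * x ^ (Suc p - k))
      = (\<Sum>k\<le>p. of_nat (Suc p choose Suc k) * of_nat (Suc k) * x ^ (p - k))"
    by (subst sum.atMost_Suc_shift) simp
  also have "\<dots> = (\<Sum>k\<le>p. of_nat (Suc p) * (of_nat (p choose k) * x ^ (p - k)))"
  proof (rule sum.cong[OF refl])
    fix k
    have "of_nat (Suc p choose Suc k) * of_nat (Suc k) = (of_nat (Suc p * (p choose k)) :: 'a)"
      by (metis Suc_times_binomial mult.commute of_nat_mult)
    then show "of_nat (Suc p choose Suc k) * of_nat (Suc k) * x ^ (p - k)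
        = of_nat (Suc p) * (of_nat (p choose k) * x ^ (p - k))"
      by (simp only: of_nat_mult mult.assoc)
  qed
  also have "\<dots> = of_nat (Suc p) * (x + 1) ^ p"
    by (simp only: sum_distrib_left[symmetric] sum_binomial_power)
  finally show ?thesis .
qed

lemma surplus_pf_count_pos:
  "0 < m \<Longrightarrow> surplus_pf_count m a = (a + 1) * (m + a + 1) ^ (m - 1)"
  by (simp add: surplus_pf_count_def)

text \<open>Multiplying by \<open>x = m + a\<close> turns every summand into \<open>C(m,c) (a + c) x^(m-c)\<close>, including
  the \<open>c = m\<close> term (which is 1) and the \<open>a = c = 0\<close> term (which is 0).\<close>
lemma surplus_pf_count_recurrence:
  assumes "0 < m"
  shows "(\<Sum>c\<le>m. (m choose c) * (if 1 \<le> a + c then surplus_pf_count (m - c) (a + c - 1) else 0))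
       = surplus_pf_count m a"
proof -
  obtain p where p: "m = Suc p"
    using assms by (cases m) auto
  define x where "x = m + a"
  have summand: "x * (if 1 \<le> a + c then surplus_pf_count (m - c) (a + c - 1) else 0)
      = (a + c) * x ^ (m - c)" if "c \<le> m" for c
  proof (cases "c = m")
    case True
    then show ?thesis
      using assms by (simp add: x_def surplus_pf_count_def)
  next
    case c_lt: False
    show ?thesis
    proof (cases "1 \<le> a + c")
      case True
      have "m - c = Suc (m - c - 1)"
        using c_lt \<open>c \<le> m\<close> by simp
      then have "x ^ (m - c) = x * x ^ (m - c - 1)"
        by (metis power_Suc)
      moreover have "a + c - 1 + 1 = a + c" "m - c + (a + c - 1) + 1 = x"
        using True c_lt \<open>c \<le> m\<close> by (simp_all add: x_def)
      moreover have "surplus_pf_count (m - c) (a + c - 1)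
          = (a + c - 1 + 1) * (m - c + (a + c - 1) + 1) ^ (m - c - 1)"
        using c_lt \<open>c \<le> m\<close> by (simp only: surplus_pf_count_pos zero_less_diff le_neq_implies_less)
      ultimately show ?thesis
        using True by (simp only: if_True mult.left_commute)
    qed simp
  qed
  have "x * (\<Sum>c\<le>m. (m choose c) * (if 1 \<le> a + c then surplus_pf_count (m - c) (a + c - 1) else 0))
      = (\<Sum>c\<le>m. (m choose c) * (a + c) * x ^ (m - c))"
    unfolding sum_distrib_left
  proof (rule sum.cong[OF refl])
    fix c assume "c \<in> {..m}"
    then show "x * ((m choose c) * (if 1 \<le> a + c then surplus_pf_count (m - c) (a + c - 1) else 0))
        = (m choose c) * (a + c) * x ^ (m - c)"
      unfolding mult.left_commute[of x] mult.assoc by (simp only: summand atMost_iff)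
  qed
  also have "\<dots> = a * (\<Sum>c\<le>m. (m choose c) * x ^ (m - c)) + (\<Sum>c\<le>m. (m choose c) * c * x ^ (m - c))"
    by (simp add: sum_distrib_left sum.distrib[symmetric] algebra_simps)
  also have "\<dots> = a * (x + 1) ^ m + m * (x + 1) ^ p"
    using sum_binomial_power[of m x] sum_binomial_times_index_power[of p x] p by simp
  also have "\<dots> = x * surplus_pf_count m a"
    using p by (simp add: x_def surplus_pf_count_def algebra_simps)
  finally show ?thesis
    using assms x_def by simp
qed

lemma card_surplus_pf: "finite D \<Longrightarrow> card (surplus_pf D a) = surplus_pf_count (card D) a"
proof (induction "card D" arbitrary: D a rule: less_induct)
  case less
  note fin = less.prems and IH_card = less.hyps
  show ?case
  proof (cases "D = {}")
    case True
    then have "surplus_pf D a = {\<lambda>_. undefined}"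
      by (auto simp: surplus_pf_def)
    then show ?thesis
      using True by (simp add: surplus_pf_count_def)
  next
    case False
    then have m: "0 < card D"
      using fin by (simp add: card_gt_0_iff)
    show ?thesis
    proof (induction a rule: less_induct)
      case (less a)
      have fiber: "card (surplus_pf (D - S) (a + card S - 1))
          = surplus_pf_count (card D - card S) (a + card S - 1)"
        if SD: "S \<subseteq> D" and pos: "1 \<le> a + card S" for S
      proof (cases "S = {}")
        case True
        then show ?thesis
          using less.IH[of "a - 1"] pos by simp
      next
        case False
        have "card (D - S) = card D - card S"
          using card_Diff_subset[OF finite_subset[OF SD fin] SD] .
        moreover have "0 < card S" "card S \<le> card D"
          using False finite_subset[OF SD fin] card_mono[OF fin SD] by (auto simp: card_gt_0_iff)
        ultimately show ?thesis
          using IH_card[of "D - S"] fin by simp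
      qed
      have "card (surplus_pf D a) = (\<Sum>S\<in>Pow D.
          (\<lambda>c. if 1 \<le> a + c then surplus_pf_count (card D - c) (a + c - 1) else 0) (card S))"
        unfolding card_surplus_pf_sum_fibers[OF fin False] using fiber by (intro sum.cong) auto
      also have "\<dots> = (\<Sum>c\<le>card D. (card D choose c)
          * (if 1 \<le> a + c then surplus_pf_count (card D - c) (a + c - 1) else 0))"
        using sum_Pow_card[OF fin,
            of "\<lambda>c. if 1 \<le> a + c then surplus_pf_count (card D - c) (a + c - 1) else 0"]
        by simp
      also have "\<dots> = surplus_pf_count (card D) a"
        by (rule surplus_pf_count_recurrence[OF m])
      finally show ?case .
    qed
  qed
qed

lemma card_parking_functions: "card (parking_functions n) = (n + 1) ^ (n - 1)"
  by (simp add: parking_functions_eq_surplus_pf card_surplus_pf surplus_pf_count_def)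

lemma card_parking_functions_num_ones:
  assumes "1 \<le> k"
  shows "card {p \<in> parking_functions n. num_ones n p = k} = (n choose k) * surplus_pf_count (n - k) (k - 1)"
proof -
  let ?D = "{1..n}"
  let ?fiber = "\<lambda>S. {q \<in> surplus_pf ?D 0. {t\<in>?D. q t = 1} = S}"
  have "{p \<in> parking_functions n. num_ones n p = k} = (\<Union>S\<in>{S. S \<subseteq> ?D \<and> card S = k}. ?fiber S)"
    unfolding parking_functions_eq_surplus_pf num_ones_def by auto
  then have "card {p \<in> parking_functions n. num_ones n p = k} = (\<Sum>S\<in>{S. S \<subseteq> ?D \<and> card S = k}. card (?fiber S))"
    by (simp only:) (rule card_UN_disjoint; auto simp: finite_surplus_pf)
  also have "\<dots> = (\<Sum>S\<in>{S. S \<subseteq> ?D \<and> card S = k}. surplus_pf_count (n - k) (k - 1))"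
  proof (rule sum.cong[OF refl])
    fix S assume "S \<in> {S. S \<subseteq> ?D \<and> card S = k}"
    then have SD: "S \<subseteq> ?D" and card_S: "card S = k"
      by auto
    have "card (?D - S) = n - k"
      using card_Diff_subset[OF finite_subset[OF SD] SD] card_S by simp
    then show "card (?fiber S) = surplus_pf_count (n - k) (k - 1)"
      using card_surplus_pf_ones_fiber[OF _ SD, of 0] card_surplus_pf[of "?D - S" "k - 1"] card_S assms
      by simp
  qed
  also have "\<dots> = (n choose k) * surplus_pf_count (n - k) (k - 1)"
    using n_subsets[of ?D k] by simp
  finally show ?thesis .
qed

lemma prob_ones_Suc_eq:
  assumes "j + 2 \<le> n"
  shows "prob_ones n (Suc j) =
    real (Suc j) * (real (n choose Suc j) / real n ^ Suc j) * (real n / (real n + 1)) ^ (n - 1)"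
proof -
  have "surplus_pf_count (n - Suc j) j = Suc j * n ^ (n - j - 2)"
    using assms by (simp add: surplus_pf_count_def)
  then have "card {p \<in> parking_functions n. num_ones n p = Suc j}
      = (n choose Suc j) * (Suc j * n ^ (n - j - 2))"
    using card_parking_functions_num_ones[of "Suc j" n] by simp
  then have count: "real (card {p \<in> parking_functions n. num_ones n p = Suc j})
      = real (n choose Suc j) * real (Suc j) * real n ^ (n - j - 2)"
    by (simp only: of_nat_mult of_nat_power mult.assoc)
  have "n - j - 2 + Suc j = n - 1"
    using assms by simp
  then have powers: "real n ^ (n - 1) = real n ^ (n - j - 2) * real n ^ Suc j"
    by (metis power_add)
  have "prob_ones n (Suc j)
      = real (n choose Suc j) * real (Suc j) * real n ^ (n - j - 2) / (real n + 1) ^ (n - 1)"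
    unfolding prob_ones_def count card_parking_functions by (simp add: add.commute)
  also have "\<dots> = real (Suc j) * (real (n choose Suc j) / real n ^ Suc j)
      * (real n ^ (n - 1) / (real n + 1) ^ (n - 1))"
    using assms unfolding powers by (simp add: field_simps)
  finally show ?thesis
    by (simp only: power_divide)
qed

lemma binomial_div_power_tendsto: "(\<lambda>n. real (n choose k) / real n ^ k) \<longlonglongrightarrow> 1 / fact k"
proof -
  have eq: "real (n choose k) / real n ^ k
      = (\<Prod>i<k. (real n - real k + 1 + real i) / real n) / fact k" for n
    by (simp add: binomial_gbinomial gbinomial_pochhammer' pochhammer_prod prod_dividef
        atLeast0LessThan)
  have "(\<lambda>n. \<Prod>i<k. (real n - real k + 1 + real i) / real n) \<longlonglongrightarrow> (\<Prod>i<k. 1)"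
    by (intro tendsto_prod) real_asymp
  then show ?thesis
    unfolding eq by (intro tendsto_divide) auto
qed

theorem mainTheorem12:
  fixes j :: nat
  shows "(\<lambda>n. prob_ones n (1 + j)) \<longlonglongrightarrow> 1 / (exp 1 * fact j)"
proof -
  have "(\<lambda>n. (real n / (real n + 1)) ^ (n - 1)) \<longlonglongrightarrow> exp (-1)"
    by real_asymp
  then have lim: "(\<lambda>n. real (Suc j) * (real (n choose Suc j) / real n ^ Suc j) * (real n / (real n + 1)) ^ (n - 1))
      \<longlonglongrightarrow> real (Suc j) * (1 / fact (Suc j)) * exp (-1)"
    by (intro tendsto_mult tendsto_const binomial_div_power_tendsto)
  have limit_value: "real (Suc j) * (1 / fact (Suc j)) * exp (-1) = 1 / (exp 1 * fact j)"
    by (simp add: exp_minus field_simps del: of_nat_Suc)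
  have eq: "\<forall>\<^sub>F n in sequentially.
      real (Suc j) * (real (n choose Suc j) / real n ^ Suc j) * (real n / (real n + 1)) ^ (n - 1)
        = prob_ones n (1 + j)"
    using eventually_ge_at_top[of "j + 2"] by eventually_elim (simp add: prob_ones_Suc_eq)
  show ?thesis
    using Lim_transform_eventually[OF lim eq] unfolding limit_value .
qed

end
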